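(* Let $V$ be a Lévy measure. Set $\mathcal{A}_{sym}=\emptyset$ if $V$ is symmetric and $\mathcal{A}_{sym}=\{1\}$ otherwise. Let $0<p\le q\le2$, $\mathcal{A}=\{p,q\}\cup\mathcal{A}_{sym}$, $p_{\min}=\min\mathcal{A}$, $p_{\max}=\max\mathcal{A}$, and assume $V\in\mathscr{M}(p_{\min},p_{\max})$. Define $g(\omega)=\int_{\mathbb{R}\setminus\{0\}}\left(\mathrm{e}^{\mathrm{j}\omega a}-1-\mathrm{j}\omega a\mathbb{1}_{|a|<1}\right)V(\mathrm{d}a)$. Then there exist constants $\kappa_1,\kappa_2\ge0$ such that for all $(\omega_1,\omega_2)\in\mathbb{R}^2$, $$|g(\omega_2)-g(\omega_1)|\le\kappa_1h_{p_{\min}}(\omega_1,\omega_2)+\kappa_2h_{p_{\max}}(\omega_1,\omega_2),$$ where $h_r(x,y)=\sqrt{(|x|^r+|y|^r)|x-y|^r}$.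
   Context: A Lévy measure is a Radon measure $V$ on $\mathbb{R}\setminus\{0\}$ with $\int\min(1,a^2)V(\mathrm{d}a)<\infty$; it is symmetric if $V(B)=V(-B)$ for all Borel $B$. $\mathscr{M}(p,q)$ is the set of Radon measures $V$ on $\mathbb{R}\setminus\{0\}$ with $\int_{0<|a|<1}|a|^qV(\mathrm{d}a)<\infty$ and $\int_{|a|\ge1}|a|^pV(\mathrm{d}a)<\infty$. $\mathrm{j}=\sqrt{-1}$. *)

theory Defs
  imports "HOL-Analysis.Analysis"
begin

text \<open>Measures on \<real>\<setminus>{0} are modelled as Borel measures on \<real> giving no mass to {0}.
  Radon = finite on compact subsets of \<real>\<setminus>{0}.\<close>

definition radon_on_punctured :: "real measure \<Rightarrow> bool" where
  "radon_on_punctured V \<longleftrightarrow> sets V = sets borel \<and> emeasure V {0} = 0 \<and>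
     (\<forall>K. compact K \<and> K \<subseteq> - {0} \<longrightarrow> emeasure V K < \<infinity>)"

definition levy_measure :: "real measure \<Rightarrow> bool" where
  "levy_measure V \<longleftrightarrow> radon_on_punctured V \<and>
     (\<integral>\<^sup>+ a. ennreal (min 1 (a\<^sup>2)) \<partial>V) < \<infinity>"

definition symmetric_measure :: "real measure \<Rightarrow> bool" where
  "symmetric_measure V \<longleftrightarrow> (\<forall>B \<in> sets borel. emeasure V B = emeasure V (uminus ` B))"

definition script_M :: "real \<Rightarrow> real \<Rightarrow> real measure set" where
  "script_M p q = {V. radon_on_punctured V \<and>
     (\<integral>\<^sup>+ a. ennreal (indicator {a. 0 < \<bar>a\<bar> \<and> \<bar>a\<bar> < 1} a * \<bar>a\<bar> powr q) \<partial>V) < \<infinity> \<and>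
     (\<integral>\<^sup>+ a. ennreal (indicator {a. 1 \<le> \<bar>a\<bar>} a * \<bar>a\<bar> powr p) \<partial>V) < \<infinity>}"

definition levy_exponent :: "real measure \<Rightarrow> real \<Rightarrow> complex" where
  "levy_exponent V \<omega> = (\<integral> a. (exp (\<i> * of_real (\<omega> * a)) - 1
       - \<i> * of_real (\<omega> * a) * of_real (indicator {a. \<bar>a\<bar> < 1} a)) \<partial>V)"

definition h_fun :: "real \<Rightarrow> real \<Rightarrow> real \<Rightarrow> real" where
  "h_fun r x y = sqrt ((\<bar>x\<bar> powr r + \<bar>y\<bar> powr r) * \<bar>x - y\<bar> powr r)"

definition A_sym :: "real measure \<Rightarrow> real set" where
  "A_sym V = (if symmetric_measure V then {} else {1})"

end

theory Submission
  imports Defs "HOL-Probability.Characteristic_Functions"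
begin

(* Write g(w) as the integral of F(w, a) = e^(iwa) - 1 - iwa 1_{|a|<1}.  Since
   h_r(xa, ya) = |a|^r h_r(x, y) and h_r(x, y) >= (max(|x|,|y|) |x - y|)^(r/2), it suffices
   to bound |F(w2, a) - F(w1, a)| by a multiple of (max(|x|,|y|) |x - y|)^(r/2) for
   x = w1 a, y = w2 a, with r = p_max for small jumps |a| < 1 and r = p_min for large
   jumps; integrating against V in M(p_min, p_max) gives the claim.  For small jumps the
   compensator makes F(., a) second order, which allows 1 <= r <= 2; for large jumps only
   the bounded difference e^(iy) - e^(ix) is left, which allows 0 < r <= 1.  The exponent 1
   in A_sym guarantees both.  For symmetric V the compensator averages out, g(w) is the
   integral of cos(wa) - 1, and |cos y - cos x| = 2 |sin((x+y)/2)| |sin((x-y)/2)| admits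
   every 0 < r <= 2. *)

lemma min_one_le_powr:
  fixes t s :: real
  assumes "0 \<le> t" "0 < s" "s \<le> 1"
  shows "min 1 t \<le> t powr s"
proof (cases "t \<le> 1")
  case True
  then show ?thesis using assms powr_mono'[of s 1 t] by simp
next
  case False
  then show ?thesis using assms by (simp add: ge_one_powr_ge_zero)
qed

lemma powr_le_two_mult_powr:
  fixes D M \<rho> :: real
  assumes "0 \<le> D" "D \<le> 2 * M" "0 \<le> \<rho>" "\<rho> \<le> 1"
  shows "D powr \<rho> \<le> 2 * M powr \<rho>"
proof -
  have "D powr \<rho> \<le> (2 * M) powr \<rho>" using assms by (intro powr_mono2) auto
  also have "\<dots> = 2 powr \<rho> * M powr \<rho>" using assms by (simp add: powr_mult)
  also have "\<dots> \<le> 2 * M powr \<rho>"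
    using assms powr_mono[of \<rho> 1 "2::real"] by (intro mult_right_mono) auto
  finally show ?thesis .
qed

lemma mult_min_one_le_powr:
  fixes D M \<rho> :: real
  assumes "0 \<le> D" "D \<le> 2 * M" "1/2 \<le> \<rho>" "\<rho> \<le> 1"
  shows "D * min 1 M \<le> 2 * (M * D) powr \<rho>"
proof (cases "D = 0")
  case False
  with assms have D: "0 < D" and M: "0 < M" by auto
  have M_powr: "M powr (1 - \<rho>) * min 1 M \<le> M powr \<rho>"
  proof (cases "M \<le> 1")
    case True
    have "M powr (1 - \<rho>) * M = M powr (2 - \<rho>)"
      using M powr_add[of M "1 - \<rho>" 1] by simp
    also have "\<dots> \<le> M powr \<rho>" using True M assms by (intro powr_mono') auto
    finally show ?thesis using True by simp
  next
    case False
    then show ?thesis using assms by (simp add: powr_mono)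
  qed
  have "D * min 1 M = D powr \<rho> * (D powr (1 - \<rho>) * min 1 M)"
    using D by (simp add: powr_add[symmetric])
  also have "\<dots> \<le> D powr \<rho> * (2 * M powr (1 - \<rho>) * min 1 M)"
    using assms M powr_le_two_mult_powr[of D M "1 - \<rho>"]
    by (intro mult_left_mono mult_right_mono) auto
  also have "\<dots> \<le> D powr \<rho> * (2 * M powr \<rho>)"
    using M_powr by (intro mult_left_mono) auto
  also have "\<dots> = 2 * (M * D) powr \<rho>" using M D by (simp add: powr_mult)
  finally show ?thesis .
qed (simp)

lemma max_abs_mult_powr_le_h_fun:
  fixes x y r :: real
  assumes "0 < r"
  shows "(max \<bar>x\<bar> \<bar>y\<bar> * \<bar>x - y\<bar>) powr (r/2) \<le> h_fun r x y"
proof -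
  define M D where "M = max \<bar>x\<bar> \<bar>y\<bar>" and "D = \<bar>x - y\<bar>"
  have "M powr r \<le> \<bar>x\<bar> powr r + \<bar>y\<bar> powr r"
    by (cases "\<bar>x\<bar> \<le> \<bar>y\<bar>") (auto simp: M_def max_def)
  then have "(M * D) powr r \<le> (\<bar>x\<bar> powr r + \<bar>y\<bar> powr r) * D powr r"
    by (simp add: M_def D_def powr_mult mult_right_mono)
  moreover have "(M * D) powr (r/2) = sqrt ((M * D) powr r)"
    by (simp add: M_def D_def powr_half_sqrt[symmetric] powr_powr)
  ultimately show ?thesis
    unfolding h_fun_def M_def D_def by (simp add: real_sqrt_le_mono)
qed

lemma h_fun_nonneg: "0 \<le> h_fun r x y"
  by (simp add: h_fun_def)

lemma h_fun_mult_right: "h_fun r (x * a) (y * a) = \<bar>a\<bar> powr r * h_fun r x y"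
proof -
  have "\<bar>x * a - y * a\<bar> = \<bar>x - y\<bar> * \<bar>a\<bar>"
    by (simp add: abs_mult flip: left_diff_distrib)
  then have "(\<bar>x * a\<bar> powr r + \<bar>y * a\<bar> powr r) * \<bar>x * a - y * a\<bar> powr r
      = (\<bar>a\<bar> powr r)\<^sup>2 * ((\<bar>x\<bar> powr r + \<bar>y\<bar> powr r) * \<bar>x - y\<bar> powr r)"
    by (simp add: abs_mult powr_mult power2_eq_square algebra_simps)
  then show ?thesis by (simp add: h_fun_def real_sqrt_mult)
qed

lemma norm_iexp_diff_le: "cmod (iexp y - iexp x) \<le> min 2 \<bar>y - x\<bar>"
proof -
  have "iexp y - iexp x = iexp x * (iexp (y - x) - 1)"
    by (simp add: algebra_simps flip: exp_add)
  moreover have "cmod (iexp (y - x) - 1) \<le> 2"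
    using iexp_approx2[of "y - x" 0] by simp
  moreover have "cmod (iexp (y - x) - 1) \<le> \<bar>y - x\<bar>"
    using iexp_approx1[of "y - x" 0] by simp
  ultimately show ?thesis by (simp add: norm_mult)
qed

lemma norm_iexp_diff_le_h_fun:
  fixes x y r :: real
  assumes "0 < r" "r \<le> 1"
  shows "cmod (iexp y - iexp x) \<le> 4 * h_fun r x y"
proof -
  define M D where "M = max \<bar>x\<bar> \<bar>y\<bar>" and "D = \<bar>x - y\<bar>"
  have DM: "0 \<le> D" "D \<le> 2 * M" by (auto simp: M_def D_def)
  have "min 2 \<bar>y - x\<bar> \<le> 2 * min 1 D" by (auto simp: D_def min_def abs_minus_commute)
  with norm_iexp_diff_le[of y x] have "cmod (iexp y - iexp x) \<le> 2 * min 1 D" by linarith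
  also have "\<dots> \<le> 2 * D powr r" using assms DM min_one_le_powr by simp
  also have "\<dots> = 2 * (D powr (r/2) * D powr (r/2))" by (simp flip: powr_add)
  also have "\<dots> \<le> 2 * (D powr (r/2) * (2 * M powr (r/2)))"
    using assms DM powr_le_two_mult_powr[of D M "r/2"] by (intro mult_left_mono) auto
  also have "\<dots> = 4 * (M * D) powr (r/2)" using DM by (simp add: powr_mult)
  also have "\<dots> \<le> 4 * h_fun r x y"
    using max_abs_mult_powr_le_h_fun[OF assms(1)] by (simp add: M_def D_def)
  finally show ?thesis .
qed

lemma norm_iexp_diff_minus_linear_le_h_fun:
  fixes x y r :: real
  assumes "1 \<le> r" "r \<le> 2"
  shows "cmod (iexp y - iexp x - \<i> * of_real (y - x)) \<le> 8 * h_fun r x y"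
proof -
  define M D d where "M = max \<bar>x\<bar> \<bar>y\<bar>" and "D = \<bar>x - y\<bar>" and "d = y - x"
  have DM: "0 \<le> D" "D \<le> 2 * M" "\<bar>d\<bar> = D" by (auto simp: M_def D_def d_def)
  have second_order: "cmod (iexp d - 1 - \<i> * of_real d) \<le> 2 * D * min 1 M"
  proof -
    have "cmod (iexp d - 1 - \<i> * of_real d) \<le> d\<^sup>2 / 2"
      using iexp_approx1[of d 1] by (simp add: power2_eq_square numeral_2_eq_2 diff_diff_eq)
    also have "\<dots> = D * D / 2" using DM(3) by (metis power2_abs power2_eq_square)
    also have "\<dots> \<le> D * M" using mult_left_mono[OF DM(2) DM(1)] by simp
    finally have "cmod (iexp d - 1 - \<i> * of_real d) \<le> D * M" .
    moreover have "cmod (iexp d - 1 - \<i> * of_real d) \<le> 2 * D"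
      using iexp_approx2[of d 1] DM by (simp add: diff_diff_eq)
    moreover have "0 \<le> D * M" using DM by simp
    ultimately show ?thesis by (auto simp: min_def)
  qed
  have first_order: "cmod (of_real d * (iexp x - 1)) \<le> 2 * D * min 1 M"
  proof -
    have "cmod (iexp x - 1) \<le> min 2 \<bar>x\<bar>" using norm_iexp_diff_le[of x 0] by simp
    moreover have "min 2 \<bar>x\<bar> \<le> 2 * min 1 M" by (auto simp: M_def min_def)
    ultimately have "cmod (iexp x - 1) \<le> 2 * min 1 M" by linarith
    then show ?thesis
      using DM mult_left_mono[of "cmod (iexp x - 1)" "2 * min 1 M" D] by (simp add: norm_mult)
  qed
  have "iexp y - iexp x - \<i> * of_real (y - x)
      = iexp x * (iexp d - 1 - \<i> * of_real d) + \<i> * (of_real d * (iexp x - 1))"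
    by (simp add: d_def algebra_simps flip: exp_add)
  then have "cmod (iexp y - iexp x - \<i> * of_real (y - x)) \<le> 4 * (D * min 1 M)"
    using second_order first_order
      norm_triangle_ineq[of "iexp x * (iexp d - 1 - \<i> * of_real d)"
        "\<i> * (of_real d * (iexp x - 1))"]
    by (simp add: norm_mult)
  also have "\<dots> \<le> 8 * (M * D) powr (r/2)"
    using assms DM mult_min_one_le_powr[of D M "r/2"] by simp
  also have "\<dots> \<le> 8 * h_fun r x y"
    using assms max_abs_mult_powr_le_h_fun[of r x y] by (simp add: M_def D_def)
  finally show ?thesis .
qed

lemma abs_cos_diff_le_h_fun:
  fixes x y r :: real
  assumes "0 < r" "r \<le> 2"
  shows "\<bar>cos y - cos x\<bar> \<le> 2 * h_fun r x y"
proof -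
  define M D where "M = max \<bar>x\<bar> \<bar>y\<bar>" and "D = \<bar>x - y\<bar>"
  have MD: "0 \<le> M" "0 \<le> D" by (auto simp: M_def D_def)
  have "\<bar>sin ((y + x) / 2)\<bar> \<le> min 1 M"
    using abs_sin_x_le_abs_x[of "(y + x) / 2"] abs_sin_le_one by (auto simp: M_def)
  also have "\<dots> \<le> M powr (r/2)" using assms MD by (intro min_one_le_powr) auto
  finally have sin_M: "\<bar>sin ((y + x) / 2)\<bar> \<le> M powr (r/2)" .
  have "\<bar>sin ((x - y) / 2)\<bar> \<le> min 1 D"
    using abs_sin_x_le_abs_x[of "(x - y) / 2"] abs_sin_le_one by (auto simp: D_def)
  also have "\<dots> \<le> D powr (r/2)" using assms MD by (intro min_one_le_powr) auto
  finally have sin_D: "\<bar>sin ((x - y) / 2)\<bar> \<le> D powr (r/2)" .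
  have "\<bar>cos y - cos x\<bar> = 2 * (\<bar>sin ((y + x) / 2)\<bar> * \<bar>sin ((x - y) / 2)\<bar>)"
    by (simp add: cos_diff_cos abs_mult)
  also have "\<dots> \<le> 2 * (M powr (r/2) * D powr (r/2))"
    using sin_M sin_D by (intro mult_left_mono mult_mono) auto
  also have "\<dots> = 2 * (M * D) powr (r/2)" using MD by (simp add: powr_mult)
  also have "\<dots> \<le> 2 * h_fun r x y"
    using assms max_abs_mult_powr_le_h_fun[of r x y] by (simp add: M_def D_def)
  finally show ?thesis .
qed

definition levy_integrand :: "real \<Rightarrow> real \<Rightarrow> complex" where
  "levy_integrand \<omega> a =
     iexp (\<omega> * a) - 1 - \<i> * of_real (\<omega> * a) * of_real (indicator {a. \<bar>a\<bar> < 1} a)"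

lemma levy_exponent_eq_integral: "levy_exponent V \<omega> = (\<integral>a. levy_integrand \<omega> a \<partial>V)"
  unfolding levy_exponent_def levy_integrand_def ..

lemma levy_integrand_measurable [measurable]: "levy_integrand \<omega> \<in> borel_measurable borel"
  unfolding levy_integrand_def by measurable

lemma norm_levy_integrand_le: "cmod (levy_integrand \<omega> a) \<le> (\<omega>\<^sup>2 / 2 + 2) * min 1 (a\<^sup>2)"
proof (cases "\<bar>a\<bar> < 1")
  case True
  then have "min 1 (a\<^sup>2) = a\<^sup>2" by (simp add: abs_square_le_1 less_imp_le)
  moreover have "cmod (levy_integrand \<omega> a) \<le> (\<omega> * a)\<^sup>2 / 2"
    using True iexp_approx1[of "\<omega> * a" 1]
    by (simp add: levy_integrand_def power2_eq_square numeral_2_eq_2 diff_diff_eq)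
  moreover have "(\<omega> * a)\<^sup>2 / 2 \<le> (\<omega>\<^sup>2 / 2 + 2) * a\<^sup>2"
    by (simp add: power_mult_distrib algebra_simps)
  ultimately show ?thesis by simp
next
  case False
  then have "min 1 (a\<^sup>2) = 1" using abs_square_less_1[of a] by simp
  moreover have "cmod (levy_integrand \<omega> a) \<le> 2"
    using False norm_iexp_diff_le[of "\<omega> * a" 0] by (simp add: levy_integrand_def)
  ultimately show ?thesis by (simp add: add_increasing)
qed

lemma integrable_levy_integrand:
  assumes "levy_measure V"
  shows "integrable V (levy_integrand \<omega>)"
proof (rule Bochner_Integration.integrable_bound)
  have [measurable_cong]: "sets V = sets borel"
    using assms by (simp add: levy_measure_def radon_on_punctured_def)
  show "integrable V (\<lambda>a. (\<omega>\<^sup>2 / 2 + 2) * min 1 (a\<^sup>2))"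
    using assms by (intro integrable_mult_right integrableI_bounded) (auto simp: levy_measure_def)
  show "levy_integrand \<omega> \<in> borel_measurable V" by measurable
  show "AE a in V. norm (levy_integrand \<omega> a) \<le> norm ((\<omega>\<^sup>2 / 2 + 2) * min 1 (a\<^sup>2))"
    using norm_levy_integrand_le by (intro AE_I2) (simp add: order_trans)
qed

(* As 0 powr r = 0, the weight vanishes at a = 0, in accordance with the set
   {0 < |a| < 1} in script_M. *)
definition small_jump_weight :: "real \<Rightarrow> real \<Rightarrow> real" where
  "small_jump_weight r a = (if \<bar>a\<bar> < 1 then \<bar>a\<bar> powr r else 0)"

definition large_jump_weight :: "real \<Rightarrow> real \<Rightarrow> real" where
  "large_jump_weight r a = (if 1 \<le> \<bar>a\<bar> then \<bar>a\<bar> powr r else 0)"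

lemma integrable_jump_weights:
  assumes "V \<in> script_M p q"
  shows "integrable V (large_jump_weight p)" and "integrable V (small_jump_weight q)"
proof -
  have [measurable_cong]: "sets V = sets borel"
    using assms by (simp add: script_M_def radon_on_punctured_def)
  have "large_jump_weight p = (\<lambda>a. indicator {a. 1 \<le> \<bar>a\<bar>} a * \<bar>a\<bar> powr p)"
    and "small_jump_weight q = (\<lambda>a. indicator {a. 0 < \<bar>a\<bar> \<and> \<bar>a\<bar> < 1} a * \<bar>a\<bar> powr q)"
    by (auto simp: fun_eq_iff large_jump_weight_def small_jump_weight_def indicator_def)
  then show "integrable V (large_jump_weight p)" and "integrable V (small_jump_weight q)"
    using assms by (auto intro!: integrableI_nonneg simp: script_M_def)
qed

lemma levy_integrand_diff_le:
  assumes "0 < t" "t \<le> 1" "1 \<le> s" "s \<le> 2"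
  shows "cmod (levy_integrand \<omega>2 a - levy_integrand \<omega>1 a)
    \<le> 8 * (large_jump_weight t a * h_fun t \<omega>1 \<omega>2 + small_jump_weight s a * h_fun s \<omega>1 \<omega>2)"
proof (cases "\<bar>a\<bar> < 1")
  case True
  have "levy_integrand \<omega>2 a - levy_integrand \<omega>1 a
      = iexp (\<omega>2 * a) - iexp (\<omega>1 * a) - \<i> * of_real (\<omega>2 * a - \<omega>1 * a)"
    using True by (simp add: levy_integrand_def algebra_simps)
  also have "cmod \<dots> \<le> 8 * h_fun s (\<omega>1 * a) (\<omega>2 * a)"
    using assms by (intro norm_iexp_diff_minus_linear_le_h_fun) auto
  finally show ?thesis
    using True by (simp add: h_fun_mult_right large_jump_weight_def small_jump_weight_def)
next
  case False
  have "levy_integrand \<omega>2 a - levy_integrand \<omega>1 a = iexp (\<omega>2 * a) - iexp (\<omega>1 * a)"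
    using False by (simp add: levy_integrand_def)
  also have "cmod \<dots> \<le> 4 * h_fun t (\<omega>1 * a) (\<omega>2 * a)"
    using assms by (intro norm_iexp_diff_le_h_fun) auto
  finally show ?thesis
    using False mult_nonneg_nonneg[OF powr_ge_zero h_fun_nonneg, of "\<bar>a\<bar>" t t \<omega>1 \<omega>2]
    by (simp add: h_fun_mult_right large_jump_weight_def small_jump_weight_def)
qed

lemma abs_cos_diff_le_jump_weights:
  assumes "0 < t" "t \<le> 2" "0 < s" "s \<le> 2"
  shows "\<bar>cos (\<omega>2 * a) - cos (\<omega>1 * a)\<bar>
    \<le> 2 * (large_jump_weight t a * h_fun t \<omega>1 \<omega>2 + small_jump_weight s a * h_fun s \<omega>1 \<omega>2)"
proof (cases "\<bar>a\<bar> < 1")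
  case True
  have "\<bar>cos (\<omega>2 * a) - cos (\<omega>1 * a)\<bar> \<le> 2 * h_fun s (\<omega>1 * a) (\<omega>2 * a)"
    using assms by (intro abs_cos_diff_le_h_fun) auto
  then show ?thesis
    using True by (simp add: h_fun_mult_right large_jump_weight_def small_jump_weight_def)
next
  case False
  have "\<bar>cos (\<omega>2 * a) - cos (\<omega>1 * a)\<bar> \<le> 2 * h_fun t (\<omega>1 * a) (\<omega>2 * a)"
    using assms by (intro abs_cos_diff_le_h_fun) auto
  then show ?thesis
    using False by (simp add: h_fun_mult_right large_jump_weight_def small_jump_weight_def)
qed

lemma distr_uminus_symmetric_measure:
  fixes V :: "real measure"
  assumes sets_V: "sets V = sets borel" and "symmetric_measure V"
  shows "distr V borel uminus = V"
proof (rule measure_eqI)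
  show "sets (distr V borel uminus) = sets V" using sets_V by simp
  fix A assume "A \<in> sets (distr V borel uminus)"
  then have A: "A \<in> sets borel" by simp
  have [measurable_cong]: "sets V = sets borel" by (fact sets_V)
  have "uminus \<in> borel_measurable V" by measurable
  then have "emeasure (distr V borel uminus) A = emeasure V (uminus -` A \<inter> space V)"
    using A by (rule emeasure_distr)
  also have "uminus -` A \<inter> space V = uminus ` A"
    using sets_eq_imp_space_eq[OF sets_V] by force
  also have "emeasure V (uminus ` A) = emeasure V A"
    using assms(2) A unfolding symmetric_measure_def by simp
  finally show "emeasure (distr V borel uminus) A = emeasure V A" .
qed

lemma levy_integrand_plus_reflection:
  "levy_integrand \<omega> a + levy_integrand \<omega> (- a) = 2 * (of_real (cos (\<omega> * a)) - 1)"
  by (simp add: levy_integrand_def complex_eq_iff Re_exp Im_exp indicator_def)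

lemma levy_exponent_symmetric:
  assumes "levy_measure V" and "symmetric_measure V"
  shows "integrable V (\<lambda>a. of_real (cos (\<omega> * a) - 1) :: complex)"
    and "levy_exponent V \<omega> = (\<integral>a. of_real (cos (\<omega> * a) - 1) \<partial>V)"
proof -
  have sets_V [measurable_cong]: "sets V = sets borel"
    using assms(1) by (simp add: levy_measure_def radon_on_punctured_def)
  have reflect: "distr V borel uminus = V"
    using distr_uminus_symmetric_measure[OF sets_V assms(2)] .
  have F: "integrable V (levy_integrand \<omega>)"
    using assms(1) by (rule integrable_levy_integrand)
  then have F_reflected: "integrable V (\<lambda>a. levy_integrand \<omega> (- a))"
    using integrable_distr_eq[of uminus V borel "levy_integrand \<omega>"] by (simp add: reflect)
  have integral_reflected: "(\<integral>a. levy_integrand \<omega> (- a) \<partial>V) = (\<integral>a. levy_integrand \<omega> a \<partial>V)"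
    using integral_distr[of uminus V borel "levy_integrand \<omega>"] by (simp add: reflect)
  have average: "(\<lambda>a. of_real (cos (\<omega> * a) - 1))
      = (\<lambda>a. (levy_integrand \<omega> a + levy_integrand \<omega> (- a)) / 2)"
    by (simp add: levy_integrand_plus_reflection del: right_diff_distrib_numeral)
  show "integrable V (\<lambda>a. of_real (cos (\<omega> * a) - 1) :: complex)"
    unfolding average using F F_reflected by simp
  show "levy_exponent V \<omega> = (\<integral>a. of_real (cos (\<omega> * a) - 1) \<partial>V)"
    unfolding average levy_exponent_eq_integral
    using F F_reflected integral_reflected by simp
qed

lemma levy_exponent_h_fun_bound:
  fixes G :: "real \<Rightarrow> real \<Rightarrow> complex"
  assumes "V \<in> script_M t s" and "0 \<le> C"
    and G_integrable: "\<And>\<omega>. integrable V (G \<omega>)"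
    and G_integral: "\<And>\<omega>. levy_exponent V \<omega> = (\<integral>a. G \<omega> a \<partial>V)"
    and G_diff: "\<And>\<omega>1 \<omega>2 a. cmod (G \<omega>2 a - G \<omega>1 a)
      \<le> C * (large_jump_weight t a * h_fun t \<omega>1 \<omega>2 + small_jump_weight s a * h_fun s \<omega>1 \<omega>2)"
  shows "\<exists>\<kappa>1 \<kappa>2. \<kappa>1 \<ge> 0 \<and> \<kappa>2 \<ge> 0 \<and> (\<forall>\<omega>1 \<omega>2.
     cmod (levy_exponent V \<omega>2 - levy_exponent V \<omega>1)
       \<le> \<kappa>1 * h_fun t \<omega>1 \<omega>2 + \<kappa>2 * h_fun s \<omega>1 \<omega>2)"
proof (intro exI conjI allI)
  note weights = integrable_jump_weights[OF assms(1)]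
  show "0 \<le> C * (\<integral>a. large_jump_weight t a \<partial>V)" "0 \<le> C * (\<integral>a. small_jump_weight s a \<partial>V)"
    using assms(2) by (auto intro!: integral_nonneg_AE simp: large_jump_weight_def small_jump_weight_def)
  fix \<omega>1 \<omega>2
  have "cmod (levy_exponent V \<omega>2 - levy_exponent V \<omega>1) = cmod (\<integral>a. G \<omega>2 a - G \<omega>1 a \<partial>V)"
    by (simp add: G_integral G_integrable)
  also have "\<dots> \<le> (\<integral>a. C * (large_jump_weight t a * h_fun t \<omega>1 \<omega>2
                          + small_jump_weight s a * h_fun s \<omega>1 \<omega>2) \<partial>V)"
    using weights G_integrable G_diff by (intro Bochner_Integration.integral_norm_bound_integral) auto
  also have "\<dots> = C * (\<integral>a. large_jump_weight t a \<partial>V) * h_fun t \<omega>1 \<omega>2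
                 + C * (\<integral>a. small_jump_weight s a \<partial>V) * h_fun s \<omega>1 \<omega>2"
    using weights by (simp add: algebra_simps)
  finally show "cmod (levy_exponent V \<omega>2 - levy_exponent V \<omega>1)
    \<le> C * (\<integral>a. large_jump_weight t a \<partial>V) * h_fun t \<omega>1 \<omega>2
      + C * (\<integral>a. small_jump_weight s a \<partial>V) * h_fun s \<omega>1 \<omega>2" .
qed

theorem lemma3p12:
  fixes V :: "real measure" and p q :: real
  assumes "levy_measure V"
    and "0 < p" and "p \<le> q" and "q \<le> 2"
    and "V \<in> script_M (Min ({p, q} \<union> A_sym V)) (Max ({p, q} \<union> A_sym V))"
  shows "\<exists>\<kappa>1 \<kappa>2. \<kappa>1 \<ge> 0 \<and> \<kappa>2 \<ge> 0 \<and> (\<forall>\<omega>1 \<omega>2.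
     cmod (levy_exponent V \<omega>2 - levy_exponent V \<omega>1)
       \<le> \<kappa>1 * h_fun (Min ({p, q} \<union> A_sym V)) \<omega>1 \<omega>2
        + \<kappa>2 * h_fun (Max ({p, q} \<union> A_sym V)) \<omega>1 \<omega>2)"
proof (cases "symmetric_measure V")
  case True
  have "cmod (of_real (cos (\<omega>2 * a) - 1) - of_real (cos (\<omega>1 * a) - 1))
    \<le> 2 * (large_jump_weight p a * h_fun p \<omega>1 \<omega>2 + small_jump_weight q a * h_fun q \<omega>1 \<omega>2)"
    for \<omega>1 \<omega>2 a :: real
    using assms abs_cos_diff_le_jump_weights[of p q \<omega>2 a \<omega>1] by (simp flip: of_real_diff)
  moreover have "Min ({p, q} \<union> A_sym V) = p" "Max ({p, q} \<union> A_sym V) = q"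
    using assms True by (simp_all add: A_sym_def)
  ultimately show ?thesis
    using assms levy_exponent_symmetric[OF assms(1) True]
    by (intro levy_exponent_h_fun_bound
        [where C = 2 and G = "\<lambda>\<omega> a. of_real (cos (\<omega> * a) - 1)"]) auto
next
  case False
  then have "Min ({p, q} \<union> A_sym V) = min p 1" "Max ({p, q} \<union> A_sym V) = max q 1"
    using assms by (simp_all add: A_sym_def)
  with assms show ?thesis
    using integrable_levy_integrand levy_exponent_eq_integral
      levy_integrand_diff_le[of "min p 1" "max q 1"]
    by (intro levy_exponent_h_fun_bound[where C = 8 and G = levy_integrand]) auto
qed

end
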